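(* With $P_\lambda$ and its concave hull $\bar P_\lambda$ as below: (a) if $0\le\lambda'<\lambda<1$ and $P_\lambda(q)<\bar P_\lambda(q)$, then $P_{\lambda'}(q)<\bar P_{\lambda'}(q)$; (b) if $1<\lambda<\lambda'$ and $P_\lambda(q)<\bar P_\lambda(q)$, then $P_{\lambda'}(q)<\bar P_{\lambda'}(q)$.
   Context: $F$ is a value distribution (support $[v_L,v_H]$ or $[v_L,\infty)$, $v_L\ge0$, atomless except possibly at $v_H$, finite mean). The value function is $v(q)=\inf\{v:F(v)>1-q\}$ for $q\in[0,1]$ (nonincreasing, nonnegative). For $\lambda\ge0$, $P_\lambda(q)=\lambda\int_0^qv(t)\,dt+(1-\lambda)\,q\,v(q)$ on $[0,1]$, and $\bar P_\lambda$ denotes the concave hull (smallest concave majorant) of $P_\lambda$ on $[0,1]$. *)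

theory Defs
  imports "HOL-Analysis.Analysis" "HOL-Probability.Probability"
begin

definition msupport :: "real measure \<Rightarrow> real set" where
  "msupport M = {x. \<forall>e>0. measure M {x - e <..< x + e} > 0}"

definition valfun :: "(real \<Rightarrow> real) \<Rightarrow> real \<Rightarrow> real" where
  "valfun F q = Inf {v. F v > 1 - q}"

definition Plam :: "(real \<Rightarrow> real) \<Rightarrow> real \<Rightarrow> real \<Rightarrow> real" where
  "Plam F l q = l * integral {0..q} (valfun F) + (1 - l) * q * valfun F q"

definition concave_hull01 :: "(real \<Rightarrow> real) \<Rightarrow> real \<Rightarrow> real" where
  "concave_hull01 g q =
     Inf {h q | h. concave_on {0..1} h \<and> (\<forall>x\<in>{0..1}. g x \<le> h x)}"

end

theory Submission
  imports Defs
begin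

text \<open>For any \<open>l, l'\<close> the identity
  \<open>(1 - l') (1 - l) P\<^sub>l = (1 - l)\<^sup>2 P\<^sub>l\<^sub>' + (l - l') (1 - l) V\<close> holds, where
  \<open>V q = \<integral>\<^sub>0\<^sup>q v\<close> is concave because the value function \<open>v\<close> is nonincreasing.
  In both cases (a) and (b) the first two coefficients are positive and the third is nonnegative.
  Hence if \<open>P\<^sub>l\<^sub>'\<close> touches its concave hull at \<open>q\<close>, adding the concave function
  \<open>(l - l') (1 - l) V\<close> to concave majorants of \<open>(1 - l)\<^sup>2 P\<^sub>l\<^sub>'\<close> shows that \<open>P\<^sub>l\<close> touches
  its concave hull at \<open>q\<close> as well. Concave majorants exist because \<open>q v(q) \<le> E X\<close> by Markov's
  inequality.\<close>

lemma concave_hull01_le: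
  assumes "concave_on {0..1} h" "\<forall>x\<in>{0..1}. g x \<le> h x" "q \<in> {0..1}"
  shows "concave_hull01 g q \<le> h q"
  unfolding concave_hull01_def
proof (rule cInf_lower)
  show "h q \<in> {h q | h. concave_on {0..1} h \<and> (\<forall>x\<in>{0..1}. g x \<le> h x)}"
    using assms(1,2) by blast
  show "bdd_below {h q | h. concave_on {0..1} h \<and> (\<forall>x\<in>{0..1}. g x \<le> h x)}"
    using assms(3) by (auto intro!: bdd_belowI[of _ "g q"])
qed

lemma concave_hull01_combination_le:
  fixes f g V :: "real \<Rightarrow> real"
  assumes c: "0 < c" and d: "0 < d" and e: "0 \<le> e" and V: "concave_on {0..1} V"
    and comb: "\<forall>x\<in>{0..1}. c * f x = d * g x + e * V x"
    and majorant: "\<exists>h. concave_on {0..1} h \<and> (\<forall>x\<in>{0..1}. g x \<le> h x)"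
    and q: "q \<in> {0..1}"
  shows "c * concave_hull01 f q \<le> d * concave_hull01 g q + e * V q"
proof -
  have "(c * concave_hull01 f q - e * V q) / d \<le> h q"
    if h: "concave_on {0..1} h" "\<forall>x\<in>{0..1}. g x \<le> h x" for h
  proof -
    have "concave_on {0..1} (\<lambda>x. (1 / c) * (d * h x + e * V x))"
      using c d e h(1) V by (intro concave_on_cmul concave_on_add) auto
    moreover have "\<forall>x\<in>{0..1}. f x \<le> (1 / c) * (d * h x + e * V x)"
    proof
      fix x :: real assume x: "x \<in> {0..1}"
      have "c * f x \<le> d * h x + e * V x" using comb h(2) d x by auto
      then show "f x \<le> (1 / c) * (d * h x + e * V x)" using c by (simp add: field_simps)
    qed
    ultimately have "concave_hull01 f q \<le> (1 / c) * (d * h q + e * V q)"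
      using q by (rule concave_hull01_le)
    then show ?thesis using c d by (simp add: field_simps)
  qed
  then have "(c * concave_hull01 f q - e * V q) / d \<le> concave_hull01 g q"
    using majorant unfolding concave_hull01_def[of g] by (intro cInf_greatest) auto
  then show ?thesis using d by (simp add: field_simps)
qed

lemma (in real_distribution) measure_compact_disjoint_msupport:
  assumes K: "compact K" and disj: "K \<inter> msupport M = {}"
  shows "measure M K = 0"
proof -
  have "\<forall>z. \<exists>e>0. z \<in> K \<longrightarrow> measure M {z - e<..<z + e} = 0"
  proof
    fix z
    show "\<exists>e>0. z \<in> K \<longrightarrow> measure M {z - e<..<z + e} = 0"
    proof (cases "z \<in> K")
      case True
      then have "z \<notin> msupport M" using disj by auto
      then obtain e where "e > 0" "\<not> measure M {z - e<..<z + e} > 0"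
        unfolding msupport_def by auto
      then show ?thesis using measure_nonneg[of M "{z - e<..<z + e}"] by (intro exI[of _ e]) auto
    qed (auto intro: exI[of _ 1])
  qed
  then obtain e where e: "\<And>z. e z > 0" "\<And>z. z \<in> K \<Longrightarrow> measure M {z - e z<..<z + e z} = 0"
    by metis
  obtain T where T: "T \<subseteq> K" "finite T" "K \<subseteq> (\<Union>z\<in>T. {z - e z<..<z + e z})"
    using K by (rule compactE_image[of K K "\<lambda>z. {z - e z<..<z + e z}"])
      (use e(1) in force)+
  have "measure M K \<le> measure M (\<Union>z\<in>T. {z - e z<..<z + e z})"
    using T by (intro finite_measure_mono) auto
  also have "\<dots> \<le> (\<Sum>z\<in>T. measure M {z - e z<..<z + e z})"
    using T by (intro finite_measure_subadditive_finite) auto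
  also have "\<dots> = 0" using T e by (auto intro!: sum.neutral)
  finally show ?thesis by (simp add: measure_le_0_iff)
qed

lemma (in real_distribution) cdf_eq_0_below_msupport:
  assumes supp: "msupport M \<subseteq> {vL..}" and x: "x < vL"
  shows "cdf M x = 0"
proof -
  have "cdf M a = cdf M x" if "a < x" for a
  proof -
    have "measure M {a<..x} \<le> measure M {a..x}" by (intro finite_measure_mono) auto
    also have "\<dots> = 0" using supp x by (intro measure_compact_disjoint_msupport) auto
    finally show ?thesis using cdf_diff_eq[OF that] by (simp add: measure_le_0_iff)
  qed
  then have "eventually (\<lambda>a. cdf M a = cdf M x) at_bot"
    by (auto simp: eventually_at_bot_dense)
  then have "((\<lambda>_::real. cdf M x) \<longlongrightarrow> 0) at_bot"
    using cdf_lim_at_bot by (rule Lim_transform_eventually[rotated])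
  then show ?thesis by (simp add: tendsto_const_iff)
qed

lemma integrable_on_antimono_on:
  fixes f :: "real \<Rightarrow> real"
  assumes "antimono_on {a..b} f"
  shows "f integrable_on {a..b}"
proof -
  have "mono_on {a..b} (\<lambda>x. - f x)"
    using assms by (auto intro!: monotone_onI dest: monotone_onD)
  then have "(\<lambda>x. - f x) integrable_on {a..b}" by (rule integrable_on_mono_on)
  then show ?thesis using integrable_neg by fastforce
qed

lemma antimono_on_mult_le_integral:
  fixes f :: "real \<Rightarrow> real"
  assumes mono: "antimono_on {a<..b} f" and int: "f integrable_on {x..z}"
    and "a \<le> x" "x \<le> z" "z \<le> b"
  shows "(z - x) * f z \<le> integral {x..z} f"
proof -
  have "(z - x) * f z = integral {x<..<z} (\<lambda>_. f z)"
    using \<open>x \<le> z\<close> integral_open_interval_real[of x z "\<lambda>_. f z"] by simp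
  also have "\<dots> \<le> integral {x<..<z} f"
    using int assms(3-5) by (intro integral_le)
      (auto simp: integrable_on_open_interval_real intro!: monotone_onD[OF mono])
  also have "\<dots> = integral {x..z} f" by (simp add: integral_open_interval_real)
  finally show ?thesis .
qed

lemma antimono_on_integral_le_mult:
  fixes f :: "real \<Rightarrow> real"
  assumes mono: "antimono_on {a<..b} f" and int: "f integrable_on {z..y}"
    and "a < z" "z \<le> y" "y \<le> b"
  shows "integral {z..y} f \<le> (y - z) * f z"
proof -
  have "integral {z..y} f \<le> integral {z..y} (\<lambda>_. f z)"
    using int assms(3-5) by (intro integral_le) (auto intro!: monotone_onD[OF mono])
  then show ?thesis using \<open>z \<le> y\<close> by (simp add: mult.commute)
qed

lemma concave_on_integral_antimono_on:
  fixes f :: "real \<Rightarrow> real"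
  assumes mono: "antimono_on {a<..b} f" \<comment> \<open>nothing at \<open>a\<close>, where \<open>valfun\<close> is \<open>Inf {}\<close>\<close>
  shows "concave_on {a..b} (\<lambda>x. integral {a..x} f)"
proof (cases "f integrable_on {a..b}")
  case True
  let ?F = "\<lambda>x. integral {a..x} f"
  have int: "f integrable_on {x..y}" if "a \<le> x" "y \<le> b" for x y
    using that by (intro integrable_subinterval_real[OF True]) auto
  have diff: "?F y - ?F x = integral {x..y} f" if "a \<le> x" "x \<le> y" "y \<le> b" for x y
  proof -
    have "integral {a..x} f + integral {x..y} f = integral {a..y} f"
      using that by (intro Henstock_Kurzweil_Integration.integral_combine int) auto
    then show ?thesis by simp
  qed
  show ?thesis
  proof (rule concave_on_linorderI)
    fix t x y :: real
    assume t: "0 < t" "t < 1" and x: "x \<in> {a..b}" and y: "y \<in> {a..b}" and "x < y"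
    define z where "z = (1 - t) * x + t * y"
    have zx: "z - x = t * (y - x)" and yz: "y - z = (1 - t) * (y - x)"
      by (simp_all add: z_def algebra_simps)
    have "0 < t * (y - x)" "0 < (1 - t) * (y - x)" using t \<open>x < y\<close> by simp_all
    then have "x < z" "z < y" unfolding zx[symmetric] yz[symmetric] by simp_all
    with x y have z: "a < z" "z < b" by auto
    have "t * (?F y - ?F z) \<le> t * ((y - z) * f z)"
      using diff[of z y] antimono_on_integral_le_mult[OF mono int[of z y]] t z y \<open>z < y\<close> by simp
    also have "\<dots> = (1 - t) * ((z - x) * f z)" by (simp add: zx yz)
    also have "\<dots> \<le> (1 - t) * (?F z - ?F x)"
      using diff[of x z] antimono_on_mult_le_integral[OF mono int[of x z]] t x z \<open>x < z\<close> by simp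
    finally show "(1 - t) * ?F x + t * ?F y \<le> ?F ((1 - t) *\<^sub>R x + t *\<^sub>R y)"
      by (simp add: z_def algebra_simps)
  qed simp
next
  case False
  \<comment> \<open>then all the integrals take the junk value \<open>0\<close>\<close>
  have zero: "integral {a..x} f = 0" if "x \<in> {a..b}" for x
  proof (cases "x = a")
    case False
    have "f integrable_on {x..b}"
      using mono \<open>x \<in> {a..b}\<close> \<open>x \<noteq> a\<close>
      by (intro integrable_on_antimono_on) (rule monotone_on_subset, auto)
    then have "\<not> f integrable_on {a..x}"
      using \<open>\<not> f integrable_on {a..b}\<close> \<open>x \<in> {a..b}\<close>
        Henstock_Kurzweil_Integration.integrable_combine[of a x b f]
      by auto
    then show ?thesis by (rule not_integrable_integral)
  qed simp
  show ?thesis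
  proof (rule concave_on_linorderI)
    fix t x y :: real
    assume "0 < t" "t < 1" "x \<in> {a..b}" "y \<in> {a..b}"
    moreover have "(1 - t) *\<^sub>R x + t *\<^sub>R y \<in> {a..b}"
      using calculation convexD[OF convex_real_interval(5)[of a b], of x y "1 - t" t] by auto
    ultimately show "(1 - t) * integral {a..x} f + t * integral {a..y} f
        \<le> integral {a..(1 - t) *\<^sub>R x + t *\<^sub>R y} f"
      by (simp add: zero)
  qed simp
qed

locale nonneg_real_distribution = real_distribution +
  assumes cdf_eq_0_neg: "x < 0 \<Longrightarrow> cdf M x = 0"
begin

lemma valfun_set_nonempty:
  assumes "0 < q" shows "{w. 1 - q < cdf M w} \<noteq> {}"
proof -
  have "eventually (\<lambda>w. 1 - q < cdf M w) at_top"
    using cdf_lim_at_top_prob by (rule order_tendstoD(1)) (use assms in simp)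
  then show ?thesis by (auto simp: eventually_at_top_linorder)
qed

lemma valfun_set_nonneg:
  assumes "q \<le> 1" "1 - q < cdf M w" shows "0 \<le> w"
  using assms cdf_eq_0_neg[of w] by force

lemma bdd_below_valfun_set: "q \<le> 1 \<Longrightarrow> bdd_below {w. 1 - q < cdf M w}"
  using valfun_set_nonneg by (intro bdd_belowI[of _ 0]) blast

lemma valfun_nonneg:
  assumes "0 < q" "q \<le> 1" shows "0 \<le> valfun (cdf M) q"
  unfolding valfun_def using valfun_set_nonempty[OF assms(1)] valfun_set_nonneg[OF assms(2)]
  by (intro cInf_greatest) auto

lemma valfun_antimono: "antimono_on {0<..1} (valfun (cdf M))"
proof (rule monotone_onI)
  fix q q' :: real assume "q \<in> {0<..1}" "q' \<in> {0<..1}" "q \<le> q'"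
  then show "valfun (cdf M) q' \<le> valfun (cdf M) q"
    unfolding valfun_def using valfun_set_nonempty bdd_below_valfun_set
    by (intro cInf_superset_mono) auto
qed

lemma abs_mult_valfun_le:
  assumes int: "integrable M (\<lambda>x. x)" and q: "0 \<le> q" "q \<le> 1"
  shows "\<bar>q * valfun (cdf M) q\<bar> \<le> expectation (\<lambda>x. \<bar>x\<bar>)"
proof (cases "q = 0")
  case False
  let ?v = "valfun (cdf M) q" and ?K = "expectation (\<lambda>x. \<bar>x\<bar>)"
  have q_pos: "0 < q" using q False by simp
  have "t \<le> ?K / q" if t: "0 < t" "t < ?v" for t
  proof -
    have "t \<notin> {w. 1 - q < cdf M w}"
      using t cInf_lower[OF _ bdd_below_valfun_set[OF q(2)], of t] by (auto simp: valfun_def)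
    then have "q \<le> 1 - cdf M t" by simp
    also have "\<dots> = prob {t<..}"
      using prob_compl[of "{..t}"] by (simp add: cdf_def Compl_eq_Diff_UNIV[symmetric])
    also have "\<dots> \<le> prob {x \<in> space M. t \<le> \<bar>x\<bar>}" by (intro finite_measure_mono) auto
    also have "\<dots> \<le> ?K / t"
      using int t(1) by (intro integral_Markov_inequality_measure[where A = "{}"]) auto
    finally show ?thesis using t(1) q_pos by (simp add: field_simps)
  qed
  then have "?v \<le> ?K / q"
    using valfun_nonneg[OF q_pos q(2)] q_pos by (cases "0 < ?v") (auto intro: dense_le_bounded)
  then show ?thesis using q_pos valfun_nonneg[OF q_pos q(2)] by (simp add: field_simps)
qed simp

end

lemma Plam_affine_combination:
  "(1 - l') * (1 - l) * Plam F l q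
     = (1 - l)\<^sup>2 * Plam F l' q + (l - l') * (1 - l) * integral {0..q} (valfun F)"
  unfolding Plam_def by (simp add: algebra_simps power2_eq_square)

context nonneg_real_distribution
begin

lemma Plam_has_concave_majorant:
  assumes int: "integrable M (\<lambda>x. x)" and l: "0 \<le> l"
  shows "\<exists>h. concave_on {0..1} h \<and> (\<forall>x\<in>{0..1}. Plam (cdf M) l x \<le> h x)"
proof (intro exI conjI ballI)
  let ?V = "\<lambda>x. integral {0..x} (valfun (cdf M))" and ?K = "expectation (\<lambda>x. \<bar>x\<bar>)"
  show "concave_on {0..1} (\<lambda>x. l * ?V x + \<bar>1 - l\<bar> * ?K)"
    using concave_on_integral_antimono_on[OF valfun_antimono] l
    by (intro concave_on_add concave_on_cmul) (auto simp: concave_on_const)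
  fix x :: real assume x: "x \<in> {0..1}"
  have "(1 - l) * (x * valfun (cdf M) x) \<le> \<bar>1 - l\<bar> * \<bar>x * valfun (cdf M) x\<bar>"
    by (metis abs_ge_self abs_mult)
  also have "\<dots> \<le> \<bar>1 - l\<bar> * ?K"
    using abs_mult_valfun_le[OF int] x by (intro mult_left_mono) auto
  finally show "Plam (cdf M) l x \<le> l * ?V x + \<bar>1 - l\<bar> * ?K"
    unfolding Plam_def by (simp add: mult.assoc)
qed

lemma Plam_lt_concave_hull01_propagates:
  assumes int: "integrable M (\<lambda>x. x)" and "0 \<le> l'"
    and l: "(l' < l \<and> l < 1) \<or> (1 < l \<and> l < l')"
    and q: "q \<in> {0..1}"
    and lt: "Plam (cdf M) l q < concave_hull01 (Plam (cdf M) l) q"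
  shows "Plam (cdf M) l' q < concave_hull01 (Plam (cdf M) l') q"
proof (rule ccontr)
  let ?P = "Plam (cdf M) l" and ?P' = "Plam (cdf M) l'"
    and ?V = "\<lambda>x. integral {0..x} (valfun (cdf M))"
  let ?c = "(1 - l') * (1 - l)" and ?d = "(1 - l)\<^sup>2" and ?e = "(l - l') * (1 - l)"
  assume "\<not> ?thesis"
  then have touch: "concave_hull01 ?P' q \<le> ?P' q" by simp
  have c: "0 < ?c" and d: "0 < ?d" and e: "0 \<le> ?e"
    using l by (auto simp: zero_less_mult_iff zero_le_mult_iff)
  have "?c * concave_hull01 ?P q \<le> ?d * concave_hull01 ?P' q + ?e * ?V q"
    using concave_on_integral_antimono_on[OF valfun_antimono] Plam_affine_combination
      Plam_has_concave_majorant[OF int \<open>0 \<le> l'\<close>] q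
    by (intro concave_hull01_combination_le[OF c d e]) auto
  also have "\<dots> \<le> ?d * ?P' q + ?e * ?V q" using touch d by simp
  also have "\<dots> = ?c * ?P q" by (rule Plam_affine_combination[symmetric])
  finally have "concave_hull01 ?P q \<le> ?P q" using c by (simp only: mult_le_cancel_left_pos)
  with lt show False by simp
qed

end

theorem propositionB2:
  fixes M :: "real measure" and vL :: real
  assumes dist: "real_distribution M"
    and vL_nonneg: "0 \<le> vL"
    and supp: "(\<exists>vH. vL < vH \<and> msupport M = {vL..vH} \<and>
                   (\<forall>x. x \<noteq> vH \<longrightarrow> measure M {x} = 0))
             \<or> (msupport M = {vL..} \<and> (\<forall>x. measure M {x} = 0))"
    and mean: "integrable M (\<lambda>x. x)"
  shows "(\<forall>l' l q. 0 \<le> l' \<and> l' < l \<and> l < 1 \<and> q \<in> {0..1} \<and>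
            Plam (cdf M) l q < concave_hull01 (Plam (cdf M) l) q \<longrightarrow>
            Plam (cdf M) l' q < concave_hull01 (Plam (cdf M) l') q)
       \<and> (\<forall>l l' q. 1 < l \<and> l < l' \<and> q \<in> {0..1} \<and>
            Plam (cdf M) l q < concave_hull01 (Plam (cdf M) l) q \<longrightarrow>
            Plam (cdf M) l' q < concave_hull01 (Plam (cdf M) l') q)"
proof -
  interpret real_distribution M by (rule dist)
  interpret nonneg_real_distribution M
  proof
    fix x :: real assume "x < 0"
    then show "cdf M x = 0"
      using supp vL_nonneg by (intro cdf_eq_0_below_msupport[of vL]) auto
  qed
  show ?thesis
    by (intro conjI allI impI; rule Plam_lt_concave_hull01_propagates[OF mean]) auto
qed

end
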